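(* Let $ABCD$ be a (nondegenerate) rectangle and let $E,F,P,Q$ be points in the same plane. Assume that $h_{BC}(EF)>|AB|$ and $h_{AB}(PQ)>|BC|$. Then $$\mu(ABCDEFPQ)\geq \tfrac{1}{2}\bigl(h_{BC}(EF)-|AB|\bigr)|BC|+\tfrac{1}{2}\bigl(h_{AB}(PQ)-|BC|\bigr)|AB|+|AB||BC|.$$
   Context: For points $K_1,\dots,K_n$ in the plane, $\mu(K_1K_2\cdots K_n)$ denotes the area of the convex hull of $\{K_1,\dots,K_n\}$. For points $A,B$ and distinct points $D,C$, the height $h_{DC}(AB)$ is the distance between the two lines parallel to $DC$ passing through $A$ and through $B$ (i.e. the length of the perpendicular from one of $A,B$ to the parallel of $DC$ through the other). $|XY|$ denotes the length of segment $XY$. *)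

theory Defs
  imports "HOL-Analysis.Analysis"
begin

type_synonym point = "real ^ 2"

definition hull_area :: "point set \<Rightarrow> real" where
  "hull_area S = measure lebesgue (convex hull S)"

definition is_rectangle :: "point \<Rightarrow> point \<Rightarrow> point \<Rightarrow> point \<Rightarrow> bool" where
  "is_rectangle A B C D \<longleftrightarrow> A \<noteq> B \<and> B \<noteq> C \<and> (A - B) \<bullet> (C - B) = 0 \<and> D = A + (C - B)"

text \<open>h_{DC}(AB): distance from B to the line through A parallel to DC.\<close>
definition height :: "point \<Rightarrow> point \<Rightarrow> point \<Rightarrow> point \<Rightarrow> real" where
  "height D C A B = infdist B {A + t *\<^sub>R (C - D) | t. True}"

end

theory Submission
  imports Defs
begin

text \<open>Let \<open>u = A - B\<close>, \<open>w = C - B\<close>, and among \<open>B, D, E, F, P, Q\<close> pick points \<open>Xl, Xr\<close> extreme in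
  direction \<open>u\<close> and \<open>Xb, Xt\<close> extreme in direction \<open>w\<close>. The convex hull contains the rectangle and
  the four triangles erected on its sides with apexes \<open>Xl, Xr, Xb, Xt\<close>; these five pieces overlap
  only in null sets (two triangles at a common vertex of the rectangle are separated by a line through
  that vertex). The two triangles on the sides parallel to \<open>u\<close> have total area
  \<open>norm u * (W - norm w) / 2\<close>, where \<open>W = w \<bullet> (Xt - Xb) / norm w \<ge> height A B P Q\<close>;
  symmetrically for the other pair.\<close>

definition cross2 :: "real ^ 2 \<Rightarrow> real ^ 2 \<Rightarrow> real" where
  "cross2 p q = p$1 * q$2 - p$2 * q$1"

lemma cross2_mult_cross2:
  "cross2 p q * cross2 u w = (p \<bullet> u) * (q \<bullet> w) - (p \<bullet> w) * (q \<bullet> u)"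
  unfolding cross2_def inner_vec_def sum_2 by (simp add: algebra_simps)

lemma abs_cross2_orthogonal:
  assumes "u \<bullet> w = 0"
  shows "\<bar>cross2 u w\<bar> = norm u * norm w"
proof -
  have "(cross2 u w)\<^sup>2 = (norm u * norm w)\<^sup>2"
    using cross2_mult_cross2[of u w u w] assms
    by (simp add: power2_eq_square power_mult_distrib flip: power2_norm_eq_inner)
  then show ?thesis
    by (metis abs_of_nonneg norm_ge_zero power2_eq_imp_eq real_sqrt_abs real_sqrt_power zero_le_mult_iff)
qed

lemma measure_triangle_base_height:
  fixes V e d X :: "real ^ 2"
  assumes "e \<bullet> d = 0" "d \<noteq> 0"
  shows "measure lebesgue (convex hull {V, V + e, X}) = norm e * \<bar>d \<bullet> (X - V)\<bar> / (2 * norm d)"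
proof -
  have "compact (convex hull {V, V + e, X})"
    by (intro finite_imp_compact_convex_hull) auto
  then have "measure lebesgue (convex hull {V, V + e, X}) = \<bar>cross2 e (X - V)\<bar> / 2"
    by (subst measure_completion)
      (auto dest: compact_imp_closed simp: content_triangle cross2_def abs_minus_commute mult.commute)
  moreover have "\<bar>cross2 e (X - V)\<bar> * (norm e * norm d) = norm e * (norm e * \<bar>d \<bullet> (X - V)\<bar>)"
  proof -
    have "cross2 e (X - V) * cross2 e d = (e \<bullet> e) * (d \<bullet> (X - V))"
      using cross2_mult_cross2[of e "X - V" e d] assms(1) by (simp add: inner_commute)
    then have "\<bar>cross2 e (X - V)\<bar> * \<bar>cross2 e d\<bar> = (e \<bullet> e) * \<bar>d \<bullet> (X - V)\<bar>"
      by (metis abs_mult abs_of_nonneg inner_ge_zero)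
    then show ?thesis
      using abs_cross2_orthogonal[OF assms(1)] by (simp add: power2_eq_square flip: power2_norm_eq_inner)
  qed
  ultimately show ?thesis
    using assms(2) by (cases "e = 0") (auto simp: cross2_def field_simps)
qed

lemma infdist_line_le:
  fixes P Q d e :: "real ^ 2"
  assumes "d \<bullet> e = 0" "d \<noteq> 0" "e \<noteq> 0"
  shows "infdist Q {P + t *\<^sub>R d | t. True} \<le> \<bar>(Q - P) \<bullet> e\<bar> / norm e"
proof -
  define q where "q = Q - P - ((Q - P) \<bullet> d / (d \<bullet> d)) *\<^sub>R d"
  have "q \<bullet> d = 0"
    using assms(2) by (simp add: q_def inner_diff_left)
  then have "\<bar>cross2 d q\<bar> = norm d * norm q"
    by (simp add: abs_cross2_orthogonal inner_commute)
  moreover have "cross2 d q * cross2 d e = (d \<bullet> d) * (q \<bullet> e)"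
    using cross2_mult_cross2[of d q d e] assms(1) by simp
  ultimately have "norm d * norm q * (norm d * norm e) = (d \<bullet> d) * \<bar>q \<bullet> e\<bar>"
    using abs_cross2_orthogonal[OF assms(1)] by (metis abs_mult abs_of_nonneg inner_ge_zero)
  moreover have "q \<bullet> e = (Q - P) \<bullet> e"
    using assms(1) by (simp add: q_def inner_diff_left)
  ultimately have "norm q * norm e = \<bar>(Q - P) \<bullet> e\<bar>"
    using assms(2) by (simp add: power2_eq_square flip: power2_norm_eq_inner)
  then have "norm q = \<bar>(Q - P) \<bullet> e\<bar> / norm e"
    using assms(3) by (simp add: field_simps)
  moreover have "infdist Q {P + t *\<^sub>R d | t. True} \<le> norm q"
    using infdist_le[of "P + ((Q - P) \<bullet> d / (d \<bullet> d)) *\<^sub>R d" "{P + t *\<^sub>R d | t. True}" Q]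
    by (auto simp: q_def dist_norm algebra_simps)
  ultimately show ?thesis
    by simp
qed

lemma convex_hull_subset_halfspace_le:
  assumes "\<And>x. x \<in> S \<Longrightarrow> a \<bullet> x \<le> b"
  shows "convex hull S \<subseteq> {x. a \<bullet> x \<le> b}"
  using assms by (intro hull_minimal convex_halfspace_le) auto

lemma convex_hull_subset_halfspace_ge:
  assumes "\<And>x. x \<in> S \<Longrightarrow> b \<le> a \<bullet> x"
  shows "convex hull S \<subseteq> {x. b \<le> a \<bullet> x}"
  using assms by (intro hull_minimal convex_halfspace_ge) auto

lemma negligible_Int_halfspaces:
  fixes a :: "'a::euclidean_space"
  assumes "a \<noteq> 0" "S \<subseteq> {x. a \<bullet> x \<le> b}" "T \<subseteq> {x. b \<le> a \<bullet> x}"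
  shows "negligible (S \<inter> T)"
proof (rule negligible_subset)
  show "negligible {x. a \<bullet> x = b}"
    using assms(1) by (rule negligible_hyperplane[OF disjI1])
  show "S \<inter> T \<subseteq> {x. a \<bullet> x = b}"
    using assms(2,3) by fastforce
qed

lemma measure_Un_negligible_Int:
  assumes "S \<in> lmeasurable" "T \<in> lmeasurable" "negligible (S \<inter> T)"
  shows "measure lebesgue (S \<union> T) = measure lebesgue S + measure lebesgue T"
  using measure_Un3[OF assms(1,2)] negligible_imp_measure0[OF assms(3)] by simp

lemma lmeasurable_convex_hull_finite:
  fixes S :: "'a::euclidean_space set"
  assumes "finite S"
  shows "convex hull S \<in> lmeasurable"
  using assms
  by (intro lmeasurable_compact finite_imp_compact_convex_hull)

lemma finite_obtain_min_max:
  fixes f :: "'a \<Rightarrow> 'b::linorder"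
  assumes "finite S" "S \<noteq> {}"
  obtains x y where "x \<in> S" "y \<in> S" "\<And>z. z \<in> S \<Longrightarrow> f x \<le> f z \<and> f z \<le> f y"
proof -
  have "Min (f ` S) \<in> f ` S" "Max (f ` S) \<in> f ` S"
    using assms by simp_all
  then obtain x y where "x \<in> S" "f x = Min (f ` S)" "y \<in> S" "f y = Max (f ` S)"
    by (metis imageE)
  then show thesis
    using that assms(1) by simp
qed

lemma negligible_Int_corner_triangles:
  fixes V a b P Q :: "'a::euclidean_space"
  assumes "a \<bullet> b = 0" "a \<noteq> 0" "b \<noteq> 0"
    and "b \<bullet> P \<le> b \<bullet> V" "a \<bullet> Q \<le> a \<bullet> V"
    and "a \<bullet> Q \<le> a \<bullet> P" "b \<bullet> P \<le> b \<bullet> Q"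
  shows "negligible (convex hull {V, V + a, P} \<inter> convex hull {V, V + b, Q})"
proof -
  define \<alpha> where "\<alpha> = a \<bullet> V - a \<bullet> Q"
  define \<gamma> where "\<gamma> = b \<bullet> V - b \<bullet> P"
  have "\<alpha> \<ge> 0" "\<gamma> \<ge> 0"
    using assms(4,5) by (auto simp: \<alpha>_def \<gamma>_def)
  have ba: "b \<bullet> a = 0"
    using assms(1) by (simp add: inner_commute)
  show ?thesis
  proof (cases "\<alpha> = 0 \<and> \<gamma> = 0")
    case True
    show ?thesis
    proof (rule negligible_Int_halfspaces[where a = "- a" and b = "- (a \<bullet> V)"])
      show "convex hull {V, V + a, P} \<subseteq> {x. - a \<bullet> x \<le> - (a \<bullet> V)}"
        using True assms(6) by (intro convex_hull_subset_halfspace_le) (auto simp: \<alpha>_def inner_add_right)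
      show "convex hull {V, V + b, Q} \<subseteq> {x. - (a \<bullet> V) \<le> - a \<bullet> x}"
        using assms(1,5) by (intro convex_hull_subset_halfspace_ge) (auto simp: inner_add_right)
    qed (use assms(2) in simp)
  next
    case False
    text \<open>Separate along the line through \<open>V\<close> and the point whose \<open>a\<close>-coordinate is that of \<open>Q\<close>
      and whose \<open>b\<close>-coordinate is that of \<open>P\<close>.\<close>
    define n where "n = \<gamma> *\<^sub>R a - \<alpha> *\<^sub>R b"
    have "n \<bullet> a = \<gamma> * (a \<bullet> a)" "n \<bullet> b = - \<alpha> * (b \<bullet> b)"
      using assms(1) ba by (auto simp: n_def inner_diff_left)
    then have "n \<noteq> 0"
      using False assms(2,3) by auto
    moreover have "convex hull {V, V + b, Q} \<subseteq> {x. n \<bullet> x \<le> n \<bullet> V}"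
    proof (intro convex_hull_subset_halfspace_le)
      have "\<gamma> * (a \<bullet> Q) - \<alpha> * (b \<bullet> Q) \<le> \<gamma> * (a \<bullet> V) - \<alpha> * (b \<bullet> V)"
        using mult_left_mono[OF assms(7) \<open>\<alpha> \<ge> 0\<close>] by (simp add: \<alpha>_def \<gamma>_def algebra_simps)
      then show "x \<in> {V, V + b, Q} \<Longrightarrow> n \<bullet> x \<le> n \<bullet> V" for x
        using mult_nonneg_nonneg[OF \<open>\<alpha> \<ge> 0\<close> inner_ge_zero[of b]]
        by (auto simp: n_def inner_diff_left inner_add_right distrib_left assms(1))
    qed
    moreover have "convex hull {V, V + a, P} \<subseteq> {x. n \<bullet> V \<le> n \<bullet> x}"
    proof (intro convex_hull_subset_halfspace_ge)
      have "\<gamma> * (a \<bullet> V) - \<alpha> * (b \<bullet> V) \<le> \<gamma> * (a \<bullet> P) - \<alpha> * (b \<bullet> P)"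
        using mult_left_mono[OF assms(6) \<open>\<gamma> \<ge> 0\<close>] by (simp add: \<alpha>_def \<gamma>_def algebra_simps)
      then show "x \<in> {V, V + a, P} \<Longrightarrow> n \<bullet> V \<le> n \<bullet> x" for x
        using mult_nonneg_nonneg[OF \<open>\<gamma> \<ge> 0\<close> inner_ge_zero[of a]]
        by (auto simp: n_def inner_diff_left inner_add_right distrib_left ba)
    qed
    ultimately show ?thesis
      by (subst Int_commute) (rule negligible_Int_halfspaces)
  qed
qed

lemma measure_convex_hull_rectangle_ge:
  fixes B u w :: "real ^ 2"
  assumes "u \<bullet> w = 0" "u \<noteq> 0" "w \<noteq> 0"
  shows "norm u * norm w \<le> measure lebesgue (convex hull {B, B + u, B + w, B + u + w})"
proof -
  define T1 where "T1 = convex hull {B, B + u, B + w}"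
  define T2 where "T2 = convex hull {B + w, B + w + u, B + u}"
  have wu: "w \<bullet> u = 0"
    using assms(1) by (simp add: inner_commute)
  have "measure lebesgue T1 = norm u * norm w / 2"
    unfolding T1_def measure_triangle_base_height[OF assms(1,3)] using assms(3)
    by (simp add: dot_square_norm power2_eq_square)
  moreover have "measure lebesgue T2 = norm u * norm w / 2"
    unfolding T2_def measure_triangle_base_height[OF assms(1,3)] using assms(3) wu
    by (simp add: inner_diff_right dot_square_norm power2_eq_square)
  moreover have "negligible (T1 \<inter> T2)"
  proof (rule negligible_Int_halfspaces)
    text \<open>Separate along the diagonal through \<open>B + u\<close> and \<open>B + w\<close>.\<close>
    define n where "n = (w \<bullet> w) *\<^sub>R u + (u \<bullet> u) *\<^sub>R w"
    have "n \<bullet> u = (w \<bullet> w) * (u \<bullet> u)"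
      using wu by (simp add: n_def inner_add_left)
    then show "n \<noteq> 0"
      using assms(2,3) by auto
    show "T1 \<subseteq> {x. n \<bullet> x \<le> n \<bullet> B + (u \<bullet> u) * (w \<bullet> w)}"
      unfolding T1_def using assms(1) wu
      by (intro convex_hull_subset_halfspace_le)
        (auto simp: n_def inner_add_left inner_add_right algebra_simps)
    show "T2 \<subseteq> {x. n \<bullet> B + (u \<bullet> u) * (w \<bullet> w) \<le> n \<bullet> x}"
      unfolding T2_def using assms(1) wu
      by (intro convex_hull_subset_halfspace_ge)
        (auto simp: n_def inner_add_left inner_add_right algebra_simps)
  qed
  ultimately have "norm u * norm w = measure lebesgue (T1 \<union> T2)"
    by (simp add: measure_Un_negligible_Int T1_def T2_def lmeasurable_convex_hull_finite)
  also have "\<dots> \<le> measure lebesgue (convex hull {B, B + u, B + w, B + u + w})"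
  proof (rule measure_mono_fmeasurable)
    show "T1 \<union> T2 \<subseteq> convex hull {B, B + u, B + w, B + u + w}"
      unfolding T1_def T2_def by (intro Un_least hull_mono) (auto simp: algebra_simps)
  qed (auto simp: T1_def T2_def intro!: sets.Un fmeasurableD lmeasurable_convex_hull_finite)
  finally show ?thesis .
qed

definition caps :: "'a::euclidean_space \<Rightarrow> 'a \<Rightarrow> 'a \<Rightarrow> 'a \<Rightarrow> 'a \<Rightarrow> 'a set" where
  "caps B u w X Y = convex hull {B, B + u, X} \<union> convex hull {B + w, B + w + u, Y}"

lemma convex_hull_caps_subset:
  fixes B u w X Y :: "'a::euclidean_space"
  assumes "u \<bullet> w = 0" "w \<bullet> X \<le> w \<bullet> B" "w \<bullet> (B + w) \<le> w \<bullet> Y"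
  shows "convex hull {B, B + u, X} \<subseteq> {x. w \<bullet> x \<le> w \<bullet> B}"
    and "convex hull {B + w, B + w + u, Y} \<subseteq> {x. w \<bullet> B + w \<bullet> w \<le> w \<bullet> x}"
  using assms by (intro convex_hull_subset_halfspace_le convex_hull_subset_halfspace_ge;
      auto simp: inner_add_right inner_commute)+

lemma measure_caps:
  fixes B u w X Y :: "real ^ 2"
  assumes "u \<bullet> w = 0" "w \<noteq> 0" "w \<bullet> X \<le> w \<bullet> B" "w \<bullet> (B + w) \<le> w \<bullet> Y"
  shows "measure lebesgue (caps B u w X Y) = (1/2) * (w \<bullet> (Y - X) / norm w - norm w) * norm u"
proof -
  have "negligible (convex hull {B, B + u, X} \<inter> convex hull {B + w, B + w + u, Y})"
  proof (rule negligible_Int_halfspaces)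
    show "convex hull {B, B + u, X} \<subseteq> {x. w \<bullet> x \<le> w \<bullet> B + w \<bullet> w}"
      using convex_hull_caps_subset(1)[OF assms(1,3,4)] inner_ge_zero[of w]
      by (smt (verit) mem_Collect_eq subset_iff)
  qed (use assms(2) convex_hull_caps_subset(2)[OF assms(1,3,4)] in auto)
  moreover have "measure lebesgue (convex hull {B, B + u, X})
      = norm u * (w \<bullet> B - w \<bullet> X) / (2 * norm w)"
    using assms(1,2,3) by (simp add: measure_triangle_base_height inner_diff_right)
  moreover have "measure lebesgue (convex hull {B + w, B + w + u, Y})
      = norm u * (w \<bullet> Y - w \<bullet> (B + w)) / (2 * norm w)"
    using assms(1,2,4) by (simp add: measure_triangle_base_height inner_diff_right)
  ultimately show ?thesis
    using assms(2) by (simp add: caps_def measure_Un_negligible_Int lmeasurable_convex_hull_finite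
        inner_add_right inner_diff_right dot_square_norm field_simps power2_eq_square)
qed

lemma negligible_Int_rectangle_caps:
  fixes B u w X Y :: "'a::euclidean_space"
  assumes "u \<bullet> w = 0" "w \<noteq> 0" "w \<bullet> X \<le> w \<bullet> B" "w \<bullet> (B + w) \<le> w \<bullet> Y"
  shows "negligible (convex hull {B, B + u, B + w, B + u + w} \<inter> caps B u w X Y)"
proof -
  have "convex hull {B, B + u, B + w, B + u + w} \<subseteq> {x. w \<bullet> B \<le> w \<bullet> x}"
    "convex hull {B, B + u, B + w, B + u + w} \<subseteq> {x. w \<bullet> x \<le> w \<bullet> B + w \<bullet> w}"
    using assms(1) by (intro convex_hull_subset_halfspace_le convex_hull_subset_halfspace_ge;
        auto simp: inner_add_right inner_commute)+
  then show ?thesis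
    unfolding caps_def Int_Un_distrib
    using convex_hull_caps_subset[OF assms(1,3,4)] assms(2)
    by (metis Int_commute negligible_Int_halfspaces negligible_Un)
qed

lemma negligible_Int_caps:
  fixes B u w Xl Xr Xb Xt :: "'a::euclidean_space"
  assumes "u \<bullet> w = 0" "u \<noteq> 0" "w \<noteq> 0"
    and extremes: "\<And>X. X \<in> {B, B + u + w, Xl, Xr, Xb, Xt} \<Longrightarrow>
      u \<bullet> Xl \<le> u \<bullet> X \<and> u \<bullet> X \<le> u \<bullet> Xr \<and> w \<bullet> Xb \<le> w \<bullet> X \<and> w \<bullet> X \<le> w \<bullet> Xt"
  shows "negligible (caps B u w Xb Xt \<inter> caps B w u Xl Xr)"
proof -
  have wu: "w \<bullet> u = 0"
    using assms(1) by (simp add: inner_commute)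
  note ext = extremes[of B] extremes[of "B + u + w"] extremes[of Xl] extremes[of Xr]
    extremes[of Xb] extremes[of Xt]
  have "{B + u, B + u + - u, Xb} = {B, B + u, Xb}" "{B + w, B + w + - w, Xl} = {B, B + w, Xl}"
    "{B + w + u, B + w + u + - u, Xt} = {B + w, B + w + u, Xt}"
    "{B + w + u, B + w + u + - w, Xr} = {B + u, B + u + w, Xr}"
    by (auto simp: algebra_simps)
  then have "negligible (convex hull {B, B + u, Xb} \<inter> convex hull {B, B + w, Xl})"
    "negligible (convex hull {B + u, B + u + w, Xr} \<inter> convex hull {B, B + u, Xb})"
    "negligible (convex hull {B + w, B + w + u, Xt} \<inter> convex hull {B, B + w, Xl})"
    "negligible (convex hull {B + w, B + w + u, Xt} \<inter> convex hull {B + u, B + u + w, Xr})"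
    using negligible_Int_corner_triangles[where V = B and a = u and b = w and P = Xb and Q = Xl]
      negligible_Int_corner_triangles[where V = "B + u" and a = w and b = "- u" and P = Xr and Q = Xb]
      negligible_Int_corner_triangles[where V = "B + w" and a = u and b = "- w" and P = Xt and Q = Xl]
      negligible_Int_corner_triangles
        [where V = "B + w + u" and a = "- u" and b = "- w" and P = Xt and Q = Xr]
      assms(1-3) wu ext by (simp_all add: inner_add_right)
  then show ?thesis
    unfolding caps_def Int_Un_distrib Int_Un_distrib2 by (simp add: Int_commute)
qed

text \<open>The rectangle and the four caps on its sides have pairwise negligible intersections, so
  their areas add up inside the convex hull.\<close>
lemma measure_convex_hull_rectangle_extremes:
  fixes B u w Xl Xr Xb Xt :: "real ^ 2"
  assumes "u \<bullet> w = 0" "u \<noteq> 0" "w \<noteq> 0"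
    and extremes: "\<And>X. X \<in> {B, B + u + w, Xl, Xr, Xb, Xt} \<Longrightarrow>
      u \<bullet> Xl \<le> u \<bullet> X \<and> u \<bullet> X \<le> u \<bullet> Xr \<and> w \<bullet> Xb \<le> w \<bullet> X \<and> w \<bullet> X \<le> w \<bullet> Xt"
  shows "norm u * norm w + (1/2) * (u \<bullet> (Xr - Xl) / norm u - norm u) * norm w
      + (1/2) * (w \<bullet> (Xt - Xb) / norm w - norm w) * norm u
    \<le> measure lebesgue (convex hull {B, B + u, B + w, B + u + w, Xl, Xr, Xb, Xt})"
proof -
  define rect where "rect = convex hull {B, B + u, B + w, B + u + w}"
  have wu: "w \<bullet> u = 0"
    using assms(1) by (simp add: inner_commute)
  have rect_swap: "rect = convex hull {B, B + w, B + u, B + w + u}"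
    unfolding rect_def by (simp add: insert_commute add_ac)
  have sides: "w \<bullet> Xb \<le> w \<bullet> B" "w \<bullet> (B + w) \<le> w \<bullet> Xt"
    "u \<bullet> Xl \<le> u \<bullet> B" "u \<bullet> (B + u) \<le> u \<bullet> Xr"
    using extremes[of B] extremes[of "B + u + w"] assms(1) wu by (simp_all add: inner_add_right)
  have "negligible (rect \<inter> caps B u w Xb Xt)"
    unfolding rect_def by (rule negligible_Int_rectangle_caps[OF assms(1,3) sides(1,2)])
  moreover have "negligible (rect \<inter> caps B w u Xl Xr)"
    unfolding rect_swap by (rule negligible_Int_rectangle_caps[OF wu assms(2) sides(3,4)])
  moreover have "negligible (caps B u w Xb Xt \<inter> caps B w u Xl Xr)"
    using assms by (rule negligible_Int_caps)
  ultimately have "measure lebesgue (rect \<union> caps B u w Xb Xt \<union> caps B w u Xl Xr)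
      = measure lebesgue rect + measure lebesgue (caps B u w Xb Xt) + measure lebesgue (caps B w u Xl Xr)"
    by (intro measure_Un3_negligible)
      (auto simp: rect_def caps_def intro!: lmeasurable_convex_hull_finite)
  moreover have "measure lebesgue (caps B u w Xb Xt)
      = (1/2) * (w \<bullet> (Xt - Xb) / norm w - norm w) * norm u"
    by (rule measure_caps[OF assms(1,3) sides(1,2)])
  moreover have "measure lebesgue (caps B w u Xl Xr)
      = (1/2) * (u \<bullet> (Xr - Xl) / norm u - norm u) * norm w"
    by (rule measure_caps[OF wu assms(2) sides(3,4)])
  moreover have "measure lebesgue (rect \<union> caps B u w Xb Xt \<union> caps B w u Xl Xr)
      \<le> measure lebesgue (convex hull {B, B + u, B + w, B + u + w, Xl, Xr, Xb, Xt})"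
  proof (rule measure_mono_fmeasurable)
    show "rect \<union> caps B u w Xb Xt \<union> caps B w u Xl Xr
        \<subseteq> convex hull {B, B + u, B + w, B + u + w, Xl, Xr, Xb, Xt}"
      unfolding rect_def caps_def by (intro Un_least hull_mono) (auto simp: algebra_simps)
  qed (auto simp: rect_def caps_def intro!: sets.Un fmeasurableD lmeasurable_convex_hull_finite)
  moreover have "norm u * norm w \<le> measure lebesgue rect"
    unfolding rect_def using assms(1-3) by (rule measure_convex_hull_rectangle_ge)
  ultimately show ?thesis
    by linarith
qed

lemma measure_convex_hull_rectangle_widths:
  fixes B u w E F P Q :: "real ^ 2" and S :: "(real ^ 2) set"
  assumes "u \<bullet> w = 0" "u \<noteq> 0" "w \<noteq> 0"
    and "finite S" "{B, B + u + w, E, F, P, Q} \<subseteq> S"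
  shows "norm u * norm w + (1/2) * (\<bar>(F - E) \<bullet> u\<bar> / norm u - norm u) * norm w
      + (1/2) * (\<bar>(Q - P) \<bullet> w\<bar> / norm w - norm w) * norm u
    \<le> measure lebesgue (convex hull ({B + u, B + w} \<union> S))"
proof -
  obtain Xl Xr where "Xl \<in> S" "Xr \<in> S"
    and u_ext: "\<And>X. X \<in> S \<Longrightarrow> u \<bullet> Xl \<le> u \<bullet> X \<and> u \<bullet> X \<le> u \<bullet> Xr"
    using finite_obtain_min_max[OF assms(4), of "\<lambda>X. u \<bullet> X"] assms(5) by blast
  obtain Xb Xt where "Xb \<in> S" "Xt \<in> S"
    and w_ext: "\<And>X. X \<in> S \<Longrightarrow> w \<bullet> Xb \<le> w \<bullet> X \<and> w \<bullet> X \<le> w \<bullet> Xt"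
    using finite_obtain_min_max[OF assms(4), of "\<lambda>X. w \<bullet> X"] assms(5) by blast
  have "\<bar>(F - E) \<bullet> u\<bar> \<le> u \<bullet> (Xr - Xl)"
    using u_ext[of E] u_ext[of F] assms(5)
    by (simp add: inner_commute[of _ u] inner_diff_right abs_le_iff)
  then have "(1/2) * (\<bar>(F - E) \<bullet> u\<bar> / norm u - norm u) * norm w
      \<le> (1/2) * (u \<bullet> (Xr - Xl) / norm u - norm u) * norm w"
    by (intro mult_right_mono mult_left_mono diff_right_mono divide_right_mono) auto
  moreover have "\<bar>(Q - P) \<bullet> w\<bar> \<le> w \<bullet> (Xt - Xb)"
    using w_ext[of P] w_ext[of Q] assms(5)
    by (simp add: inner_commute[of _ w] inner_diff_right abs_le_iff)
  then have "(1/2) * (\<bar>(Q - P) \<bullet> w\<bar> / norm w - norm w) * norm u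
      \<le> (1/2) * (w \<bullet> (Xt - Xb) / norm w - norm w) * norm u"
    by (intro mult_right_mono mult_left_mono diff_right_mono divide_right_mono) auto
  moreover have "norm u * norm w + (1/2) * (u \<bullet> (Xr - Xl) / norm u - norm u) * norm w
      + (1/2) * (w \<bullet> (Xt - Xb) / norm w - norm w) * norm u
    \<le> measure lebesgue (convex hull {B, B + u, B + w, B + u + w, Xl, Xr, Xb, Xt})"
  proof (rule measure_convex_hull_rectangle_extremes[OF assms(1-3)])
    fix X assume "X \<in> {B, B + u + w, Xl, Xr, Xb, Xt}"
    then have "X \<in> S"
      using assms(5) \<open>Xl \<in> S\<close> \<open>Xr \<in> S\<close> \<open>Xb \<in> S\<close> \<open>Xt \<in> S\<close> by auto
    then show "u \<bullet> Xl \<le> u \<bullet> X \<and> u \<bullet> X \<le> u \<bullet> Xr \<and> w \<bullet> Xb \<le> w \<bullet> X \<and> w \<bullet> X \<le> w \<bullet> Xt"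
      using u_ext w_ext by blast
  qed
  moreover have "measure lebesgue (convex hull {B, B + u, B + w, B + u + w, Xl, Xr, Xb, Xt})
    \<le> measure lebesgue (convex hull ({B + u, B + w} \<union> S))"
  proof (rule measure_mono_fmeasurable)
    show "convex hull {B, B + u, B + w, B + u + w, Xl, Xr, Xb, Xt}
        \<subseteq> convex hull ({B + u, B + w} \<union> S)"
      using assms(5) \<open>Xl \<in> S\<close> \<open>Xr \<in> S\<close> \<open>Xb \<in> S\<close> \<open>Xt \<in> S\<close> by (intro hull_mono) auto
  qed (use assms(4) in \<open>auto intro: fmeasurableD lmeasurable_convex_hull_finite\<close>)
  ultimately show ?thesis
    by linarith
qed

theorem mainTheorem4:
  fixes A B C D E F P Q :: point
  assumes "is_rectangle A B C D"
    and "height B C E F > dist A B"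
    and "height A B P Q > dist B C"
  shows "hull_area {A, B, C, D, E, F, P, Q} \<ge>
           (1/2) * (height B C E F - dist A B) * dist B C
         + (1/2) * (height A B P Q - dist B C) * dist A B
         + dist A B * dist B C"
proof -
  define u where "u = A - B"
  define w where "w = C - B"
  have uw: "u \<bullet> w = 0" "u \<noteq> 0" "w \<noteq> 0" and D: "D = B + u + w"
    using assms(1) by (auto simp: is_rectangle_def u_def w_def)
  have AB: "dist A B = norm u" and BC: "dist B C = norm w"
    by (simp_all add: u_def w_def dist_norm norm_minus_commute)
  have "height B C E F \<le> \<bar>(F - E) \<bullet> u\<bar> / norm u"
    unfolding height_def w_def[symmetric] using uw by (intro infdist_line_le) (auto simp: inner_commute)
  then have "(1/2) * (height B C E F - norm u) * norm w
      \<le> (1/2) * (\<bar>(F - E) \<bullet> u\<bar> / norm u - norm u) * norm w"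
    by (intro mult_right_mono mult_left_mono) auto
  moreover have "height A B P Q \<le> \<bar>(Q - P) \<bullet> w\<bar> / norm w"
    unfolding height_def using uw by (intro infdist_line_le) (auto simp: u_def inner_diff_left)
  then have "(1/2) * (height A B P Q - norm w) * norm u
      \<le> (1/2) * (\<bar>(Q - P) \<bullet> w\<bar> / norm w - norm w) * norm u"
    by (intro mult_right_mono mult_left_mono) auto
  moreover have "{B + u, B + w} \<union> {B, D, E, F, P, Q} = {A, B, C, D, E, F, P, Q}"
    by (auto simp: u_def w_def)
  then have "norm u * norm w + (1/2) * (\<bar>(F - E) \<bullet> u\<bar> / norm u - norm u) * norm w
      + (1/2) * (\<bar>(Q - P) \<bullet> w\<bar> / norm w - norm w) * norm u \<le> hull_area {A, B, C, D, E, F, P, Q}"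
    unfolding hull_area_def
    using measure_convex_hull_rectangle_widths[OF uw, of "{B, D, E, F, P, Q}" B E F P Q] D by simp
  ultimately show ?thesis
    unfolding AB BC by linarith
qed

end
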